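(* In Setting U, let $(\pi_i)$ be a positive numerical steady state, and suppose there is a constant $C_P>0$ such that for every real vector $(u_i)$ with $\sum_iu_i\pi_i|C_i|=0$, $$\sum_iu_i^2\pi_i|C_i|\le C_P\sum_{i,j}\frac{|\Gamma_{ij}|(\pi_i+\pi_j)}{|\mathbf y_i-\mathbf y_j|}(u_i-u_j)^2 .$$ Let $\rho(t)$ solve the upwind scheme with $\sum_i\rho_i(0)|C_i|=\sum_i\pi_i|C_i|$. Then for all $t\ge0$, $$\sum_i\frac{(\rho_i(t)-\pi_i)^2}{\pi_i}|C_i|\le e^{-\frac{D}{2C_P}t}\sum_i\frac{(\rho_i(0)-\pi_i)^2}{\pi_i}|C_i| .$$
   Context: Setting U: Let $\mathcal N\subset\mathbb R^\ell$ be a smooth compact connected $d$-dimensional submanifold without boundary, with geodesic distance $d_{\mathcal N}$. Let $\mathbf y_1,\dots,\mathbf y_n\in\mathcal N$ be distinct points with Voronoi cells $C_i:=\{\mathbf y\in\mathcal N: d_{\mathcal N}(\mathbf y,\mathbf y_i)\le d_{\mathcal N}(\mathbf y,\mathbf y_j)\ \forall j\}$, volumes $|C_i|:=\mathcal H^d(C_i)>0$, faces $\Gamma_{ij}:=C_i\cap C_j$ with $|\Gamma_{ij}|:=\mathcal H^{d-1}(\Gamma_{ij})$ ($|\Gamma_{ii}|:=0$), and neighbor sets $VF(i):=\{j\ne i:\Gamma_{ij}\ne\emptyset\}$; assume $|\Gamma_{ij}|>0$ for $j\in VF(i)$ and that the graph with edges $\{i,j\}$, $j\in VF(i)$, is connected.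 $|\mathbf y_j-\mathbf y_i|$ is the Euclidean distance in $\mathbb R^\ell$. Let $D>0$ be a constant and $\vec b$ a smooth tangent vector field on $\mathcal N$. For $j\in VF(i)$, $\vec n_{ij}$ is the unit normal to $\Gamma_{ij}$ (tangent to $\mathcal N$) pointing from $C_i$ into $C_j$, and $(\vec b\cdot\vec n)_{ij}$ is the value of $\vec b\cdot\vec n_{ij}$ at the point where the minimizing geodesic from $\mathbf y_i$ to $\mathbf y_j$ meets $\Gamma_{ij}$, so that $(\vec b\cdot\vec n)_{ji}=-(\vec b\cdot\vec n)_{ij}$. For real $x$, $x^+:=\max(x,0)$, $x^-:=\max(-x,0)$. Define $Q_{ij}:=\frac{|\Gamma_{ij}|}{|C_i|}\big(\frac{D}{|\mathbf y_j-\mathbf y_i|}+(\vec b\cdot\vec n)^+_{ij}\big)$ for $j\in VF(i)$, $Q_{ij}:=0$ for $j\notin VF(i)\cup\{i\}$, and $Q_{ii}:=-\sum_{j\ne i}Q_{ij}$. The upwind scheme is the ODE system $\frac{\mathrm d}{\mathrm dt}(\rho_i|C_i|)=\sum_{j\in VF(i)}|\Gamma_{ij}|\big(\frac{D(\rho_j-\rho_i)}{|\mathbf y_j-\mathbf y_i|}+(\vec b\cdot\vec n)^-_{ij}\rho_j-(\vec b\cdot\vec n)^+_{ij}\rho_i\big)$, $i=1,\dots,n$, equivalently $\frac{\mathrm d}{\mathrm dt}(\rho_i|C_i|)=\sum_jQ_{ji}\rho_j|C_j|$. A numerical steady state is a vector $(\pi_i)$ with $\sum_jQ_{ji}\pi_j|C_j|=0$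 for all $i$. *)

theory Defs
  imports "HOL-Analysis.Analysis"
begin

text \<open>Cells are indexed by 0..<n.  vol i = |C_i|, face i j = |Gamma_ij|,
  y i = generating point in R^l, bn i j = (b . n)_ij.\<close>

definition pospart :: "real \<Rightarrow> real" where "pospart x = max x 0"
definition negpart :: "real \<Rightarrow> real" where "negpart x = max (- x) 0"

text \<open>Voronoi neighbours: VF(i) = {j \<noteq> i. Gamma_ij nonempty}; by the standing
  assumption |Gamma_ij| > 0 exactly for neighbours and Gamma_ij is empty (measure 0) otherwise.\<close>
definition VF :: "nat \<Rightarrow> (nat \<Rightarrow> nat \<Rightarrow> real) \<Rightarrow> nat \<Rightarrow> nat set" where
  "VF n face i = {j. j < n \<and> j \<noteq> i \<and> 0 < face i j}"

definition Qrate :: "nat \<Rightarrow> (nat \<Rightarrow> real) \<Rightarrow> (nat \<Rightarrow> nat \<Rightarrow> real) \<Rightarrow> (nat \<Rightarrow> 'a::real_normed_vector)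
    \<Rightarrow> (nat \<Rightarrow> nat \<Rightarrow> real) \<Rightarrow> real \<Rightarrow> nat \<Rightarrow> nat \<Rightarrow> real" where
  "Qrate n vol face y bn D i j =
     (if j \<in> VF n face i then face i j / vol i * (D / norm (y j - y i) + pospart (bn i j))
      else if j = i then - (\<Sum>k\<in>VF n face i. face i k / vol i * (D / norm (y k - y i) + pospart (bn i k)))
      else 0)"

text \<open>Right-hand side of the upwind scheme for d/dt (rho_i |C_i|).\<close>
definition upwind_rhs :: "nat \<Rightarrow> (nat \<Rightarrow> real) \<Rightarrow> (nat \<Rightarrow> nat \<Rightarrow> real) \<Rightarrow> (nat \<Rightarrow> 'a::real_normed_vector)
    \<Rightarrow> (nat \<Rightarrow> nat \<Rightarrow> real) \<Rightarrow> real \<Rightarrow> (nat \<Rightarrow> real) \<Rightarrow> nat \<Rightarrow> real" where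
  "upwind_rhs n vol face y bn D rho i =
     (\<Sum>j\<in>VF n face i. face i j * (D * (rho j - rho i) / norm (y j - y i)
        + negpart (bn i j) * rho j - pospart (bn i j) * rho i))"

definition numerical_steady_state where
  "numerical_steady_state n vol face y bn D pst \<longleftrightarrow>
     (\<forall>i<n. (\<Sum>j<n. Qrate n vol face y bn D j i * pst j * vol j) = 0)"

end

theory Submission
  imports Defs
begin

text \<open>Write \<open>v = (\<rho> - \<pi>) / \<pi>\<close>. Because \<open>\<pi>\<close> is stationary, the time derivative of the
  weighted \<open>\<chi>\<^sup>2\<close> distance \<open>E = \<Sum> v\<^sub>i\<^sup>2 \<pi>\<^sub>i |C\<^sub>i|\<close> is minus the Dirichlet form
  \<open>\<Sum> c\<^sub>i\<^sub>j \<pi>\<^sub>i (v\<^sub>i - v\<^sub>j)\<^sup>2\<close> of the transfer rates of the scheme. The diffusive part of the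
  rates bounds this form below by \<open>D/2\<close> times the form of the Poincare inequality, and
  conservation of mass makes \<open>v\<close> admissible there. Hence \<open>E' \<le> -(D / (2 C\<^sub>P)) E\<close>, and
  Gronwall's argument gives the decay.\<close>

definition net_inflow :: "nat \<Rightarrow> (nat \<Rightarrow> nat \<Rightarrow> real) \<Rightarrow> (nat \<Rightarrow> real) \<Rightarrow> nat \<Rightarrow> real" where
  "net_inflow n c r i = (\<Sum>j<n. c j i * r j - c i j * r i)"

lemma sum_net_inflow: "(\<Sum>i<n. net_inflow n c r i) = 0"
proof -
  have "(\<Sum>i<n. \<Sum>j<n. c j i * r j) = (\<Sum>i<n. \<Sum>j<n. c i j * r i)"
    by (rule sum.swap)
  then show ?thesis
    by (simp add: net_inflow_def sum_subtractf)
qed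

lemma net_inflow_add:
  "net_inflow n c (\<lambda>j. f j + g j) i = net_inflow n c f i + net_inflow n c g i"
  by (simp add: net_inflow_def sum.distrib[symmetric] algebra_simps)

lemma net_inflow_cong:
  "(\<And>j. j < n \<Longrightarrow> f j = g j) \<Longrightarrow> i < n \<Longrightarrow> net_inflow n c f i = net_inflow n c g i"
  by (simp add: net_inflow_def)

lemma net_inflow_dissipation_identity:
  fixes c :: "nat \<Rightarrow> nat \<Rightarrow> real" and p v :: "nat \<Rightarrow> real"
  assumes stat: "\<And>i. i < n \<Longrightarrow> net_inflow n c p i = 0"
  shows "2 * (\<Sum>i<n. v i * net_inflow n c (\<lambda>j. p j * v j) i)
       = - (\<Sum>i<n. \<Sum>j<n. c i j * p i * (v i - v j)\<^sup>2)"
proof -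
  have balance: "(\<Sum>j<n. c j i * p j) = (\<Sum>j<n. c i j * p i)" if "i < n" for i
    using stat[OF that] by (simp add: net_inflow_def sum_subtractf)
  have squares: "(\<Sum>i<n. \<Sum>j<n. c i j * p i * (v j)\<^sup>2) = (\<Sum>i<n. \<Sum>j<n. c i j * p i * (v i)\<^sup>2)"
  proof -
    have "(\<Sum>i<n. \<Sum>j<n. c i j * p i * (v j)\<^sup>2) = (\<Sum>j<n. (v j)\<^sup>2 * (\<Sum>i<n. c i j * p i))"
      by (subst sum.swap) (simp add: sum_distrib_left mult_ac)
    also have "\<dots> = (\<Sum>j<n. (v j)\<^sup>2 * (\<Sum>i<n. c j i * p j))"
      using balance by simp
    also have "\<dots> = (\<Sum>i<n. \<Sum>j<n. c i j * p i * (v i)\<^sup>2)"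
      by (simp add: sum_distrib_left mult_ac)
    finally show ?thesis .
  qed
  have cross: "(\<Sum>i<n. \<Sum>j<n. c j i * p j * v j * v i) = (\<Sum>i<n. \<Sum>j<n. c i j * p i * v i * v j)"
    by (subst sum.swap) (simp add: mult_ac)
  have lhs: "2 * (\<Sum>i<n. v i * net_inflow n c (\<lambda>j. p j * v j) i)
     = 2 * (\<Sum>i<n. \<Sum>j<n. c j i * p j * v j * v i) - 2 * (\<Sum>i<n. \<Sum>j<n. c i j * p i * (v i)\<^sup>2)"
    by (simp add: net_inflow_def sum_distrib_left sum_subtractf algebra_simps power2_eq_square)
  have rhs: "(\<Sum>i<n. \<Sum>j<n. c i j * p i * (v i - v j)\<^sup>2)
     = (\<Sum>i<n. \<Sum>j<n. c i j * p i * (v i)\<^sup>2) + (\<Sum>i<n. \<Sum>j<n. c i j * p i * (v j)\<^sup>2)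
       - 2 * (\<Sum>i<n. \<Sum>j<n. c i j * p i * v i * v j)"
    by (simp add: sum_distrib_left sum_subtractf sum.distrib algebra_simps power2_eq_square)
  show ?thesis
    using lhs rhs squares cross by linarith
qed

lemma net_inflow_chi2_dissipation:
  fixes c :: "nat \<Rightarrow> nat \<Rightarrow> real" and p r :: "nat \<Rightarrow> real"
  assumes stat: "\<And>i. i < n \<Longrightarrow> net_inflow n c p i = 0"
    and p_nonzero: "\<And>i. i < n \<Longrightarrow> p i \<noteq> 0"
  defines "v \<equiv> \<lambda>i. (r i - p i) / p i"
  shows "(\<Sum>i<n. 2 * v i * net_inflow n c r i) = - (\<Sum>i<n. \<Sum>j<n. c i j * p i * (v i - v j)\<^sup>2)"
proof -
  have "net_inflow n c r i = net_inflow n c (\<lambda>j. p j * v j) i" if "i < n" for i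
  proof -
    have "net_inflow n c r i = net_inflow n c (\<lambda>j. p j * v j + p j) i"
      using p_nonzero that by (intro net_inflow_cong) (simp_all add: v_def field_simps)
    then show ?thesis
      using stat[OF that] by (simp add: net_inflow_add)
  qed
  then have "(\<Sum>i<n. 2 * v i * net_inflow n c r i) = 2 * (\<Sum>i<n. v i * net_inflow n c (\<lambda>j. p j * v j) i)"
    by (simp add: sum_distrib_left mult.assoc)
  also have "\<dots> = - (\<Sum>i<n. \<Sum>j<n. c i j * p i * (v i - v j)\<^sup>2)"
    using stat by (rule net_inflow_dissipation_identity)
  finally show ?thesis .
qed

text \<open>For \<open>j \<noteq> i\<close>, \<open>upwind_rate n face y bn D i j = |C\<^sub>i| Q\<^sub>i\<^sub>j\<close>.\<close>

definition upwind_rate :: "nat \<Rightarrow> (nat \<Rightarrow> nat \<Rightarrow> real) \<Rightarrow> (nat \<Rightarrow> 'a::real_normed_vector)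
    \<Rightarrow> (nat \<Rightarrow> nat \<Rightarrow> real) \<Rightarrow> real \<Rightarrow> nat \<Rightarrow> nat \<Rightarrow> real" where
  "upwind_rate n face y bn D i j =
     (if j \<in> VF n face i then face i j * (D / norm (y j - y i) + pospart (bn i j)) else 0)"

lemma VF_sym:
  assumes "\<forall>i<n. \<forall>j<n. face i j = face j i" and "i < n" and "j < n"
  shows "j \<in> VF n face i \<longleftrightarrow> i \<in> VF n face j"
  using assms by (auto simp: VF_def)

lemma upwind_rhs_eq_net_inflow:
  fixes y :: "nat \<Rightarrow> 'a::real_normed_vector"
  assumes face_sym: "\<forall>i<n. \<forall>j<n. face i j = face j i"
    and bn_anti: "\<forall>i<n. \<forall>j<n. bn j i = - bn i j"
    and i: "i < n"
  shows "upwind_rhs n vol face y bn D r i = net_inflow n (upwind_rate n face y bn D) r i"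
proof -
  let ?c = "upwind_rate n face y bn D"
  let ?g = "\<lambda>j. face i j * (D * (r j - r i) / norm (y j - y i)
      + negpart (bn i j) * r j - pospart (bn i j) * r i)"
  have "?c j i * r j - ?c i j * r i = (if j \<in> VF n face i then ?g j else 0)" if j: "j < n" for j
  proof (cases "j \<in> VF n face i")
    case True
    then have "i \<in> VF n face j"
      using VF_sym[OF face_sym i j] by blast
    moreover have "bn j i = - bn i j" "face j i = face i j"
      using bn_anti face_sym i j by blast+
    moreover have "norm (y i - y j) = norm (y j - y i)"
      by (rule norm_minus_commute)
    ultimately show ?thesis
      using True by (simp add: upwind_rate_def pospart_def negpart_def algebra_simps diff_divide_distrib)
  next
    case False
    then have "i \<notin> VF n face j"
      using VF_sym[OF face_sym i j] by blast
    then show ?thesis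
      using False by (simp add: upwind_rate_def)
  qed
  then have "net_inflow n ?c r i = (\<Sum>j<n. if j \<in> VF n face i then ?g j else 0)"
    by (simp add: net_inflow_def)
  also have "\<dots> = sum ?g ({..<n} \<inter> VF n face i)"
    by (simp add: sum.inter_restrict)
  also have "{..<n} \<inter> VF n face i = VF n face i"
    by (auto simp: VF_def)
  finally show ?thesis
    by (simp add: upwind_rhs_def)
qed

lemma steady_state_net_inflow:
  fixes y :: "nat \<Rightarrow> 'a::real_normed_vector"
  assumes vol_pos: "\<forall>i<n. 0 < vol i"
    and steady: "numerical_steady_state n vol face y bn D pst"
    and i: "i < n"
  shows "net_inflow n (upwind_rate n face y bn D) pst i = 0"
proof -
  let ?c = "upwind_rate n face y bn D"
  have out_rate: "Qrate n vol face y bn D i i * vol i = - (\<Sum>k<n. ?c i k)"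
  proof -
    have "(\<Sum>k<n. ?c i k) = (\<Sum>k\<in>{..<n} \<inter> VF n face i. face i k * (D / norm (y k - y i) + pospart (bn i k)))"
      by (simp add: upwind_rate_def sum.inter_restrict)
    also have "{..<n} \<inter> VF n face i = VF n face i"
      by (auto simp: VF_def)
    moreover have "0 < vol i"
      using vol_pos i by blast
    ultimately show ?thesis
      by (simp add: Qrate_def VF_def sum_divide_distrib[symmetric])
  qed
  have term_eq: "Qrate n vol face y bn D j i * pst j * vol j
      = ?c j i * pst j - (if j = i then (\<Sum>k<n. ?c i k) * pst i else 0)" if j: "j < n" for j
  proof (cases "j = i")
    case True
    have "Qrate n vol face y bn D i i * pst i * vol i = Qrate n vol face y bn D i i * vol i * pst i"
      by (simp only: mult_ac)
    then show ?thesis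
      using True out_rate by (simp add: upwind_rate_def VF_def)
  next
    case False
    have "0 < vol j"
      using vol_pos j by blast
    then show ?thesis
      using False by (simp add: Qrate_def upwind_rate_def)
  qed
  have "0 = (\<Sum>j<n. Qrate n vol face y bn D j i * pst j * vol j)"
    using steady i by (simp add: numerical_steady_state_def)
  also have "\<dots> = (\<Sum>j<n. ?c j i * pst j - (if j = i then (\<Sum>k<n. ?c i k) * pst i else 0))"
    using term_eq by simp
  also have "\<dots> = net_inflow n ?c pst i"
    using i by (simp add: net_inflow_def sum_subtractf sum_distrib_right)
  finally show ?thesis by simp
qed

lemma upwind_rate_ge_diffusion:
  fixes y :: "nat \<Rightarrow> 'a::real_normed_vector"
  assumes face_nonneg: "\<forall>i<n. \<forall>j<n. 0 \<le> face i j"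
    and face_diag: "\<forall>i<n. face i i = 0"
    and "i < n" "j < n"
  shows "face i j * (D / norm (y i - y j)) \<le> upwind_rate n face y bn D i j"
proof (cases "j \<in> VF n face i")
  case True
  then have "0 \<le> face i j * pospart (bn i j)"
    by (simp add: VF_def pospart_def)
  then show ?thesis
    using True by (simp add: upwind_rate_def distrib_left norm_minus_commute)
next
  case False
  then have "face i j = 0"
    using assms by (force simp: VF_def)
  then show ?thesis
    using False by (simp add: upwind_rate_def)
qed

lemma upwind_dirichlet_form_ge:
  fixes y :: "nat \<Rightarrow> 'a::real_normed_vector" and p v :: "nat \<Rightarrow> real"
  assumes face_nonneg: "\<forall>i<n. \<forall>j<n. 0 \<le> face i j"
    and face_sym: "\<forall>i<n. \<forall>j<n. face i j = face j i"
    and face_diag: "\<forall>i<n. face i i = 0"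
    and p_nonneg: "\<And>i. i < n \<Longrightarrow> 0 \<le> p i"
  shows "D / 2 * (\<Sum>i<n. \<Sum>j<n. face i j * (p i + p j) / norm (y i - y j) * (v i - v j)\<^sup>2)
    \<le> (\<Sum>i<n. \<Sum>j<n. upwind_rate n face y bn D i j * p i * (v i - v j)\<^sup>2)"
proof -
  define S where "S q = (\<Sum>i<n. \<Sum>j<n. face i j * (D / norm (y i - y j)) * q i j * (v i - v j)\<^sup>2)" for q
  have weight_swap: "S (\<lambda>i j. p j) = S (\<lambda>i j. p i)"
    unfolding S_def using face_sym
    by (subst sum.swap) (auto simp: norm_minus_commute power2_commute intro!: sum.cong)
  have "D / 2 * (\<Sum>i<n. \<Sum>j<n. face i j * (p i + p j) / norm (y i - y j) * (v i - v j)\<^sup>2)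
      = (S (\<lambda>i j. p i) + S (\<lambda>i j. p j)) / 2"
    unfolding S_def
    by (simp add: sum.distrib[symmetric] sum_distrib_left sum_divide_distrib algebra_simps add_divide_distrib)
  also have "\<dots> = S (\<lambda>i j. p i)"
    using weight_swap by simp
  also have "\<dots> \<le> (\<Sum>i<n. \<Sum>j<n. upwind_rate n face y bn D i j * p i * (v i - v j)\<^sup>2)"
    unfolding S_def
  proof (intro sum_mono)
    fix i j assume "i \<in> {..<n}" "j \<in> {..<n}"
    then show "face i j * (D / norm (y i - y j)) * p i * (v i - v j)\<^sup>2
        \<le> upwind_rate n face y bn D i j * p i * (v i - v j)\<^sup>2"
      using upwind_rate_ge_diffusion[OF face_nonneg face_diag] p_nonneg
      by (intro mult_right_mono) auto
  qed
  finally show ?thesis .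
qed

lemma nonpos_derivative_imp_le_initial:
  fixes f f' :: "real \<Rightarrow> real"
  assumes deriv: "\<And>t. t \<ge> 0 \<Longrightarrow> (f has_real_derivative f' t) (at t within {0..})"
    and nonpos: "\<And>t. t \<ge> 0 \<Longrightarrow> f' t \<le> 0"
    and "t \<ge> 0"
  shows "f t \<le> f 0"
proof (rule DERIV_nonpos_imp_decreasing_open[OF \<open>t \<ge> 0\<close>])
  fix x :: real assume x: "0 < x" "x < t"
  have "at x within {0..} = at x"
    by (rule at_within_interior) (use x in auto)
  then show "\<exists>y. (f has_real_derivative y) (at x) \<and> y \<le> 0"
    using deriv[of x] nonpos[of x] x by auto
next
  have "continuous_on {0..} f"
    unfolding continuous_on_eq_continuous_within using deriv DERIV_continuous by blast
  then show "continuous_on {0..t} f"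
    by (rule continuous_on_subset) auto
qed

lemma exp_decay_of_derivative_bound:
  fixes f f' :: "real \<Rightarrow> real"
  assumes deriv: "\<And>t. t \<ge> 0 \<Longrightarrow> (f has_real_derivative f' t) (at t within {0..})"
    and bound: "\<And>t. t \<ge> 0 \<Longrightarrow> f' t \<le> - k * f t"
    and "t \<ge> 0"
  shows "f t \<le> exp (- k * t) * f 0"
proof -
  have "((\<lambda>s. exp (k * s) * f s) has_real_derivative exp (k * s) * (k * f s + f' s)) (at s within {0..})"
    if "s \<ge> 0" for s
  proof -
    have "((\<lambda>s. exp (k * s) * f s) has_real_derivative exp (k * s) * k * f s + exp (k * s) * f' s)
        (at s within {0..})"
      by (rule derivative_eq_intros deriv[OF that] refl | simp)+
    then show ?thesis
      by (simp add: algebra_simps)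
  qed
  moreover have "exp (k * s) * (k * f s + f' s) \<le> 0" if "s \<ge> 0" for s
    using bound[OF that] by (simp add: mult_nonneg_nonpos)
  ultimately have "exp (k * t) * f t \<le> exp (k * 0) * f 0"
    by (rule nonpos_derivative_imp_le_initial[where f = "\<lambda>s. exp (k * s) * f s"]) (use \<open>t \<ge> 0\<close> in auto)
  then have "exp (- k * t) * (exp (k * t) * f t) \<le> exp (- k * t) * f 0"
    by (simp add: mult_left_mono del: mult_exp_exp)
  then show ?thesis
    by (simp add: exp_minus_inverse mult.assoc[symmetric] flip: exp_add)
qed

lemma conserved_mass:
  assumes ode: "\<And>t i. t \<ge> 0 \<Longrightarrow> i < n \<Longrightarrow>
      ((\<lambda>s. rho s i * vol i) has_real_derivative net_inflow n c (rho t) i) (at t within {0..})"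
    and "t \<ge> 0"
  shows "(\<Sum>i<n. rho t i * vol i) = (\<Sum>i<n. rho 0 i * vol i)"
proof -
  have "((\<lambda>s. \<Sum>i<n. rho s i * vol i) has_real_derivative (\<Sum>i<n. net_inflow n c (rho s) i))
      (at s within {0..})" if "s \<in> {0..}" for s
    using ode that by (intro DERIV_sum) auto
  then have "((\<lambda>s. \<Sum>i<n. rho s i * vol i) has_real_derivative 0) (at s within {0..})"
    if "s \<in> {0..}" for s
    using that by (simp add: sum_net_inflow)
  then obtain m where "\<forall>s\<in>{0..}. (\<Sum>i<n. rho s i * vol i) = m"
    using has_field_derivative_zero_constant[of "{0::real..}"] by blast
  then show ?thesis
    using \<open>t \<ge> 0\<close> by simp
qed

lemma chi2_has_derivative:
  assumes deriv: "\<And>i. i < n \<Longrightarrow> ((\<lambda>s. rho s i * vol i) has_real_derivative R i) (at t within S)"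
    and vol_pos: "\<forall>i<n. 0 < vol i" and pst_pos: "\<forall>i<n. 0 < pst i"
  shows "((\<lambda>s. \<Sum>i<n. (rho s i - pst i)\<^sup>2 / pst i * vol i) has_real_derivative
      (\<Sum>i<n. 2 * ((rho t i - pst i) / pst i) * R i)) (at t within S)"
proof (rule DERIV_sum)
  fix i assume "i \<in> {..<n}"
  then have pos: "0 < vol i" "0 < pst i"
    using vol_pos pst_pos by auto
  have "((\<lambda>s. rho s i * vol i - pst i * vol i) has_real_derivative R i) (at t within S)"
    using DERIV_diff[OF deriv DERIV_const[of "pst i * vol i"]] \<open>i \<in> {..<n}\<close> by simp
  then have "((\<lambda>s. (rho s i * vol i - pst i * vol i)\<^sup>2 / (pst i * vol i)) has_real_derivative
      of_nat 2 * (R i * (rho t i * vol i - pst i * vol i) ^ (2 - Suc 0)) / (pst i * vol i))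
      (at t within S)"
    by (intro DERIV_cdivide DERIV_power)
  moreover have "(\<lambda>s. (rho s i * vol i - pst i * vol i)\<^sup>2 / (pst i * vol i))
      = (\<lambda>s. (rho s i - pst i)\<^sup>2 / pst i * vol i)"
    using pos by (intro ext) (simp add: field_simps power2_eq_square)
  moreover have "of_nat 2 * (R i * (rho t i * vol i - pst i * vol i) ^ (2 - Suc 0)) / (pst i * vol i)
      = 2 * ((rho t i - pst i) / pst i) * R i"
    using pos by (simp add: field_simps)
  ultimately show "((\<lambda>s. (rho s i - pst i)\<^sup>2 / pst i * vol i) has_real_derivative
      2 * ((rho t i - pst i) / pst i) * R i) (at t within S)"
    by simp
qed

lemma upwind_chi2_derivative_le:
  fixes y :: "nat \<Rightarrow> 'a::real_normed_vector" and r :: "nat \<Rightarrow> real"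
  assumes face_nonneg: "\<forall>i<n. \<forall>j<n. 0 \<le> face i j"
    and face_sym: "\<forall>i<n. \<forall>j<n. face i j = face j i"
    and face_diag: "\<forall>i<n. face i i = 0"
    and D_nonneg: "0 \<le> D" and CP_pos: "0 < CP"
    and pst_pos: "\<And>i. i < n \<Longrightarrow> 0 < pst i"
    and stat: "\<And>i. i < n \<Longrightarrow> net_inflow n (upwind_rate n face y bn D) pst i = 0"
    and poincare: "\<forall>u :: nat \<Rightarrow> real. (\<Sum>i<n. u i * pst i * vol i) = 0 \<longrightarrow>
        (\<Sum>i<n. (u i)\<^sup>2 * pst i * vol i)
          \<le> CP * (\<Sum>i<n. \<Sum>j<n. face i j * (pst i + pst j) / norm (y i - y j) * (u i - u j)\<^sup>2)"
    and mass: "(\<Sum>i<n. r i * vol i) = (\<Sum>i<n. pst i * vol i)"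
  shows "(\<Sum>i<n. 2 * ((r i - pst i) / pst i) * net_inflow n (upwind_rate n face y bn D) r i)
    \<le> - (D / (2 * CP)) * (\<Sum>i<n. (r i - pst i)\<^sup>2 / pst i * vol i)"
proof -
  define v where "v i = (r i - pst i) / pst i" for i
  define P where "P = (\<Sum>i<n. \<Sum>j<n. face i j * (pst i + pst j) / norm (y i - y j) * (v i - v j)\<^sup>2)"
  define Dir where "Dir = (\<Sum>i<n. \<Sum>j<n. upwind_rate n face y bn D i j * pst i * (v i - v j)\<^sup>2)"
  have pst_nonzero: "pst i \<noteq> 0" if "i < n" for i
    using pst_pos[OF that] by simp
  have E_eq: "(\<Sum>i<n. (r i - pst i)\<^sup>2 / pst i * vol i) = (\<Sum>i<n. (v i)\<^sup>2 * pst i * vol i)"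
    unfolding v_def using pst_nonzero by (intro sum.cong) (simp_all add: field_simps power2_eq_square)
  have "(\<Sum>i<n. v i * pst i * vol i) = (\<Sum>i<n. r i * vol i - pst i * vol i)"
    unfolding v_def using pst_nonzero by (intro sum.cong) (simp_all add: field_simps)
  then have "(\<Sum>i<n. v i * pst i * vol i) = 0"
    using mass by (simp add: sum_subtractf)
  then have "(\<Sum>i<n. (r i - pst i)\<^sup>2 / pst i * vol i) \<le> CP * P"
    using poincare E_eq unfolding P_def by simp
  then have "D / (2 * CP) * (\<Sum>i<n. (r i - pst i)\<^sup>2 / pst i * vol i) \<le> D / (2 * CP) * (CP * P)"
    using D_nonneg CP_pos by (intro mult_left_mono) simp_all
  also have "\<dots> = D / 2 * P"
    using CP_pos by simp
  also have "\<dots> \<le> Dir"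
    unfolding P_def Dir_def using pst_pos
    by (intro upwind_dirichlet_form_ge face_nonneg face_sym face_diag less_imp_le)
  also have "Dir = - (\<Sum>i<n. 2 * ((r i - pst i) / pst i) * net_inflow n (upwind_rate n face y bn D) r i)"
    unfolding Dir_def v_def using net_inflow_chi2_dissipation[OF stat pst_nonzero, of r]
    by (simp add: mult.assoc)
  finally show ?thesis
    by simp
qed

theorem mainTheorem4:
  fixes n :: nat and vol :: "nat \<Rightarrow> real" and face :: "nat \<Rightarrow> nat \<Rightarrow> real"
    and y :: "nat \<Rightarrow> 'a::euclidean_space" and bn :: "nat \<Rightarrow> nat \<Rightarrow> real"
    and D CP :: real and pst :: "nat \<Rightarrow> real" and rho :: "real \<Rightarrow> nat \<Rightarrow> real"
  assumes vol_pos: "\<forall>i<n. 0 < vol i"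
    and face_nonneg: "\<forall>i<n. \<forall>j<n. 0 \<le> face i j"
    and face_sym: "\<forall>i<n. \<forall>j<n. face i j = face j i"
    and face_diag: "\<forall>i<n. face i i = 0"
    and y_distinct: "inj_on y {..<n}"
    and bn_anti: "\<forall>i<n. \<forall>j<n. bn j i = - bn i j"
    and connected: "\<forall>i<n. \<forall>j<n. (i, j) \<in> {(a, b). a < n \<and> b \<in> VF n face a}\<^sup>*"
    and D_pos: "0 < D"
    and pi_pos: "\<forall>i<n. 0 < pst i"
    and steady: "numerical_steady_state n vol face y bn D pst"
    and CP_pos: "0 < CP"
    and poincare: "\<forall>u :: nat \<Rightarrow> real. (\<Sum>i<n. u i * pst i * vol i) = 0 \<longrightarrow>
        (\<Sum>i<n. (u i)\<^sup>2 * pst i * vol i)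
          \<le> CP * (\<Sum>i<n. \<Sum>j<n. face i j * (pst i + pst j) / norm (y i - y j) * (u i - u j)\<^sup>2)"
    and ode: "\<forall>t\<ge>0. \<forall>i<n. ((\<lambda>s. rho s i * vol i) has_real_derivative
                 upwind_rhs n vol face y bn D (rho t) i) (at t within {0..})"
    and mass: "(\<Sum>i<n. rho 0 i * vol i) = (\<Sum>i<n. pst i * vol i)"
  shows "\<forall>t\<ge>0. (\<Sum>i<n. (rho t i - pst i)\<^sup>2 / pst i * vol i)
           \<le> exp (- (D / (2 * CP)) * t) * (\<Sum>i<n. (rho 0 i - pst i)\<^sup>2 / pst i * vol i)"
proof (intro allI impI)
  let ?c = "upwind_rate n face y bn D"
  define E where "E t = (\<Sum>i<n. (rho t i - pst i)\<^sup>2 / pst i * vol i)" for t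
  define E' where "E' t = (\<Sum>i<n. 2 * ((rho t i - pst i) / pst i) * net_inflow n ?c (rho t) i)" for t
  have pst_pos: "0 < pst i" if "i < n" for i
    using pi_pos that by blast
  have ode': "((\<lambda>s. rho s i * vol i) has_real_derivative net_inflow n ?c (rho t) i) (at t within {0..})"
    if "t \<ge> 0" "i < n" for t i
  proof -
    have "((\<lambda>s. rho s i * vol i) has_real_derivative upwind_rhs n vol face y bn D (rho t) i)
        (at t within {0..})"
      using ode that by blast
    then show ?thesis
      by (simp only: upwind_rhs_eq_net_inflow[OF face_sym bn_anti \<open>i < n\<close>])
  qed
  have "(E has_real_derivative E' t) (at t within {0..})" if "t \<ge> 0" for t
    unfolding E_def[abs_def] E'_def
    using ode' that by (intro chi2_has_derivative vol_pos pi_pos) simp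
  moreover have "E' t \<le> - (D / (2 * CP)) * E t" if "t \<ge> 0" for t
    unfolding E_def E'_def
    using face_nonneg face_sym face_diag D_pos CP_pos pst_pos
      steady_state_net_inflow[OF vol_pos steady] poincare
      conserved_mass[OF ode' that] mass
    by (intro upwind_chi2_derivative_le) simp_all
  ultimately show "E t \<le> exp (- (D / (2 * CP)) * t) * E 0" if "t \<ge> 0" for t
    using exp_decay_of_derivative_bound that by blast
qed

end
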